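(* If $f\in\mathrm{Bool}(X)$ is rigid, then $\mathcal{E}^W(f)=\mathcal{E}^S(f)$.
   Context: A boolean function on a finite set $X$ is a map $f:\mathcal{P}(X)\to\mathbb{Z}$ with $f(\emptyset)=0$; $\mathrm{Bool}(X)$ is their set; $f_{\mid Y}$ is the restriction to $\mathcal{P}(Y)$. For disjoint $X,Y$, $(f\star_1g)(A)=f(A\cap X)+g(A\cap Y)$ (associative, commutative, unit $1\in\mathrm{Bool}(\emptyset)$). For nonempty $X$, $f$ is indecomposable if $f=f'\star_1f''$ with $f'\in\mathrm{Bool}(X\setminus Y)$, $f''\in\mathrm{Bool}(Y)$ forces $Y\in\{\emptyset,X\}$. Each $f$ determines a unique equivalence $\sim_f^i$ with $f=\prod^{\star_1}_{Y\in X/\sim_f^i}f_{\mid Y}$ and each $f_{\mid Y}$ indecomposable; its classes are the indecomposable components of $f$ and $\mathrm{ic}(f)$ is their number. For an equivalence $\sim$: $\mathrm{cl}(\sim)=|X/{\sim}|$, $\varpi_\sim$ the canonical surjection, $f/{\sim}(A)=f(\varpi_\sim^{-1}(A))$, $(f\mid\sim)(A)=\sum_{Y\in X/\sim}f(A\cap Y)$. $\mathcal{E}^W(f)=\{\sim:\mathrm{ic}(f\mid\sim)=\mathrm{cl}(\sim)\}$ and $\mathcal{E}^S(f)=\{\sim\in\mathcal{E}^W(f):\mathrm{ic}(f/{\sim})=\mathrm{ic}(f)\}$. An indecomposable $f$ is rigid if for all disjoint $A,B\subseteq X$ with $f(A\sqcup B)=f(A)+f(B)$, one has $f(A'\sqcup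 B')=f(A')+f(B')$ for all $A'\subseteq A$, $B'\subseteq B$; a general $f$ is rigid if $f_{\mid Y}$ is rigid for each indecomposable component $Y$. *)

theory Defs
  imports Main
begin

text \<open>A boolean function on a finite set X is modelled as f :: 'a set => int,
  of which only the values on subsets of X matter, together with f {} = 0.\<close>

definition bool_fun :: "'a set \<Rightarrow> ('a set \<Rightarrow> int) \<Rightarrow> bool" where
  "bool_fun X f \<longleftrightarrow> finite X \<and> f {} = 0"

text \<open>f = f' *_1 f'' with f' in Bool(X - Y), f'' in Bool(Y).\<close>
definition decomposes :: "'a set \<Rightarrow> ('a set \<Rightarrow> int) \<Rightarrow> 'a set \<Rightarrow> bool" where
  "decomposes X f Y \<longleftrightarrow> Y \<subseteq> X \<and>
     (\<exists>f' f''. f' {} = 0 \<and> f'' {} = 0 \<and>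
        (\<forall>A. A \<subseteq> X \<longrightarrow> f A = f' (A \<inter> (X - Y)) + f'' (A \<inter> Y)))"

definition indecomposable :: "'a set \<Rightarrow> ('a set \<Rightarrow> int) \<Rightarrow> bool" where
  "indecomposable X f \<longleftrightarrow> X \<noteq> {} \<and>
     (\<forall>Y. decomposes X f Y \<longrightarrow> Y = {} \<or> Y = X)"

text \<open>The equivalence whose classes are the indecomposable components
  (f restricted to Y is just f on subsets of Y).\<close>
definition icomp_rel :: "'a set \<Rightarrow> ('a set \<Rightarrow> int) \<Rightarrow> 'a rel" where
  "icomp_rel X f = (THE R. equiv X R \<and>
      (\<forall>A. A \<subseteq> X \<longrightarrow> f A = (\<Sum>Y\<in>X // R. f (A \<inter> Y))) \<and>
      (\<forall>Y\<in>X // R. indecomposable Y f))"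

definition ic :: "'a set \<Rightarrow> ('a set \<Rightarrow> int) \<Rightarrow> nat" where
  "ic X f = card (X // icomp_rel X f)"

text \<open>f / ~ : boolean function on X/~, with preimage under canonical surjection.\<close>
definition quot_fun :: "'a set \<Rightarrow> ('a set \<Rightarrow> int) \<Rightarrow> 'a rel \<Rightarrow> ('a set set \<Rightarrow> int)" where
  "quot_fun X f R = (\<lambda>A. f {x\<in>X. R `` {x} \<in> A})"

definition split_fun :: "'a set \<Rightarrow> ('a set \<Rightarrow> int) \<Rightarrow> 'a rel \<Rightarrow> ('a set \<Rightarrow> int)" where
  "split_fun X f R = (\<lambda>A. \<Sum>Y\<in>X // R. f (A \<inter> Y))"

definition EW :: "'a set \<Rightarrow> ('a set \<Rightarrow> int) \<Rightarrow> 'a rel set" where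
  "EW X f = {R. equiv X R \<and> ic X (split_fun X f R) = card (X // R)}"

definition ES :: "'a set \<Rightarrow> ('a set \<Rightarrow> int) \<Rightarrow> 'a rel set" where
  "ES X f = {R \<in> EW X f. ic (X // R) (quot_fun X f R) = ic X f}"

definition rigid_indec :: "'a set \<Rightarrow> ('a set \<Rightarrow> int) \<Rightarrow> bool" where
  "rigid_indec X f \<longleftrightarrow>
     (\<forall>A B. A \<subseteq> X \<longrightarrow> B \<subseteq> X \<longrightarrow> A \<inter> B = {} \<longrightarrow> f (A \<union> B) = f A + f B \<longrightarrow>
        (\<forall>A' B'. A' \<subseteq> A \<longrightarrow> B' \<subseteq> B \<longrightarrow> f (A' \<union> B') = f A' + f B'))"

definition rigid :: "'a set \<Rightarrow> ('a set \<Rightarrow> int) \<Rightarrow> bool" where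
  "rigid X f \<longleftrightarrow> (\<forall>Y\<in>X // icomp_rel X f. rigid_indec Y f)"

end

theory Submission
  imports Defs "HOL-Library.Disjoint_Sets"
begin

(* An indecomposable set meeting a separator lies inside it;
   this makes the decomposition into indecomposable components unique.

   If ~ is in E^W, the classes of ~ separate f|~, so every component of f|~ lies in a class;
   as there are as many components as classes, the classes are the components, hence each class
   is indecomposable for f.  Each class then lies in a component c of f, and the components of
   f/~ are the sets of classes contained in the components of f.  Such a set is indecomposable
   for f/~: a splitting of it with union U on one side gives f c = f U + f (c - U), and rigidity
   of f on c turns this into U separating f on c, so U is empty or c.  Hence ic(f/~) = ic(f). *)

definition separator :: "'a set \<Rightarrow> ('a set \<Rightarrow> int) \<Rightarrow> 'a set \<Rightarrow> bool" where
  "separator X g Y \<longleftrightarrow> Y \<subseteq> X \<and> (\<forall>A. A \<subseteq> X \<longrightarrow> g A = g (A \<inter> Y) + g (A - Y))"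

lemma decomposes_iff_separator:
  assumes "g {} = 0"
  shows "decomposes X g Y \<longleftrightarrow> separator X g Y"
proof
  assume "decomposes X g Y"
  then obtain f' f'' where Y: "Y \<subseteq> X" and f'0: "f' {} = 0" and f''0: "f'' {} = 0"
    and g: "\<And>A. A \<subseteq> X \<Longrightarrow> g A = f' (A \<inter> (X - Y)) + f'' (A \<inter> Y)"
    unfolding decomposes_def by blast
  have "g (A \<inter> Y) = f'' (A \<inter> Y)" if "A \<subseteq> X" for A
  proof -
    have "A \<inter> Y \<inter> (X - Y) = {}" "A \<inter> Y \<inter> Y = A \<inter> Y" by blast+
    then show ?thesis using g[of "A \<inter> Y"] that f'0 by auto
  qed
  moreover have "g (A - Y) = f' (A \<inter> (X - Y))" if "A \<subseteq> X" for A
  proof -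
    have "(A - Y) \<inter> (X - Y) = A \<inter> (X - Y)" "(A - Y) \<inter> Y = {}" by blast+
    then show ?thesis using g[of "A - Y"] that f''0 by auto
  qed
  ultimately show "separator X g Y"
    using Y g
    unfolding separator_def by simp
next
  assume sep: "separator X g Y"
  have "g A = g (A \<inter> (X - Y)) + g (A \<inter> Y)" if "A \<subseteq> X" for A
  proof -
    have "A \<inter> (X - Y) = A - Y"
      using that by blast
    then show ?thesis
      using sep that unfolding separator_def by simp
  qed
  then show "decomposes X g Y"
    using sep assms unfolding decomposes_def separator_def by blast
qed

lemma indecomposable_iff_separator:
  assumes "g {} = 0"
  shows "indecomposable Y g \<longleftrightarrow> Y \<noteq> {} \<and> (\<forall>Z. separator Y g Z \<longrightarrow> Z = {} \<or> Z = Y)"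
  using decomposes_iff_separator[of g, OF assms] unfolding indecomposable_def by blast

lemma indecomposable_cong:
  assumes "\<And>B. B \<subseteq> Y \<Longrightarrow> h B = g B"
  shows "indecomposable Y h \<longleftrightarrow> indecomposable Y g"
  unfolding indecomposable_def decomposes_def by (simp add: assms)

lemma separator_restrict:
  assumes "separator X g Z" "Y \<subseteq> X"
  shows "separator Y g (Y \<inter> Z)"
  unfolding separator_def
proof (intro conjI allI impI)
  fix A assume "A \<subseteq> Y"
  moreover have "A \<inter> (Y \<inter> Z) = A \<inter> Z" "A - Y \<inter> Z = A - Z"
    using \<open>A \<subseteq> Y\<close> by blast+
  ultimately show "g A = g (A \<inter> (Y \<inter> Z)) + g (A - Y \<inter> Z)"
    using assms unfolding separator_def by auto
qed blast

lemma indecomposable_subset_separator: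
  assumes "g {} = 0" "indecomposable Y g" "separator X g Z" "Y \<subseteq> X" "Y \<inter> Z \<noteq> {}"
  shows "Y \<subseteq> Z"
proof -
  have "separator Y g (Y \<inter> Z)"
    using assms(3,4) by (rule separator_restrict)
  then have "Y \<inter> Z = Y"
    using assms indecomposable_iff_separator by blast
  then show ?thesis by blast
qed

lemma partition_on_Un:
  assumes "partition_on A P" "partition_on B Q" "A \<inter> B = {}"
  shows "partition_on (A \<union> B) (P \<union> Q)"
  using assms by (auto simp: partition_on_def intro: disjoint_union)

lemma partition_on_Union_eq_empty:
  assumes "partition_on A P" "S \<subseteq> P"
  shows "\<Union>S = {} \<longleftrightarrow> S = {}"
  using assms partition_onD3[OF assms(1)] by auto

lemma refines_blocks_within:
  assumes PQ: "refines A P Q"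
  shows "partition_on P ((\<lambda>q. {p \<in> P. p \<subseteq> q}) ` Q)"
    and "inj_on (\<lambda>q. {p \<in> P. p \<subseteq> q}) Q"
proof -
  have P: "partition_on A P" and Q: "partition_on A Q" and sub: "\<forall>p\<in>P. \<exists>q\<in>Q. p \<subseteq> q"
    using PQ by (auto simp: refines_def)
  have U: "\<Union>{p \<in> P. p \<subseteq> q} = q" if "q \<in> Q" for q
    using partition_onD1[OF refines_obtains_subset[OF PQ that]] by simp
  then show "inj_on (\<lambda>q. {p \<in> P. p \<subseteq> q}) Q"
    by (intro inj_onI) metis
  show "partition_on P ((\<lambda>q. {p \<in> P. p \<subseteq> q}) ` Q)"
  proof (rule partition_onI)
    show "\<Union>((\<lambda>q. {p \<in> P. p \<subseteq> q}) ` Q) = P"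
      using sub by auto
    show "{} \<notin> (\<lambda>q. {p \<in> P. p \<subseteq> q}) ` Q"
      using U partition_onD3[OF Q] by (metis (no_types, lifting) Union_empty imageE)
  next
    fix a b assume "a \<in> (\<lambda>q. {p \<in> P. p \<subseteq> q}) ` Q" "b \<in> (\<lambda>q. {p \<in> P. p \<subseteq> q}) ` Q" "a \<noteq> b"
    then obtain q q' where "q \<in> Q" "q' \<in> Q"
      and a: "a = {p \<in> P. p \<subseteq> q}" and b: "b = {p \<in> P. p \<subseteq> q'}"
      by blast
    moreover have "q \<noteq> q'"
      using \<open>a \<noteq> b\<close> a b by blast
    ultimately have "q \<inter> q' = {}"
      using Q by (auto simp: partition_on_def disjoint_def)
    then have "p \<notin> b" if "p \<in> a" for p
      using that partition_onD3[OF P] unfolding a b by (metis Int_subset_iff mem_Collect_eq subset_empty)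
    then show "disjnt a b"
      by (auto simp: disjnt_def)
  qed
qed

lemma refines_card_eq:
  assumes PQ: "refines A P Q" and "finite A" and card: "card P = card Q"
  shows "P = Q"
proof -
  have P: "partition_on A P" and Q: "partition_on A Q"
    using PQ by (auto simp: refines_def)
  have finP: "finite P"
    using finite_elements[OF \<open>finite A\<close> P] .
  have "{p \<in> P. p \<subseteq> q} \<noteq> {}" if "q \<in> Q" for q
    using partition_onD3[OF refines_blocks_within(1)[OF PQ]] that by blast
  then have "\<exists>p\<in>P. p \<subseteq> q" if "q \<in> Q" for q
    using that by blast
  then obtain \<sigma> where \<sigma>: "\<And>q. q \<in> Q \<Longrightarrow> \<sigma> q \<in> P \<and> \<sigma> q \<subseteq> q"
    by metis
  have \<sigma>_unique: "q = q'" if "q \<in> Q" "q' \<in> Q" "\<sigma> q \<subseteq> q'" for q q'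
  proof (rule ccontr)
    assume "q \<noteq> q'"
    then have "q \<inter> q' = {}"
      using Q that(1,2) by (auto simp: partition_on_def disjoint_def)
    then have "\<sigma> q = {}"
      using \<sigma>[OF that(1)] that(3) by blast
    then show False
      using \<sigma>[OF that(1)] partition_onD3[OF P] by simp
  qed
  have "inj_on \<sigma> Q"
    by (rule inj_onI) (use \<sigma> \<sigma>_unique in metis)
  then have "card (\<sigma> ` Q) = card P"
    using card by (simp add: card_image)
  then have \<sigma>_onto: "\<sigma> ` Q = P"
    using \<sigma> finP by (intro card_subset_eq) auto
  have "q = \<sigma> q" if q: "q \<in> Q" for q
  proof
    have "p \<subseteq> \<sigma> q" if "p \<in> P" "p \<subseteq> q" for p
      using \<sigma>_onto \<sigma>_unique q that by blast
    then show "q \<subseteq> \<sigma> q"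
      using partition_onD1[OF refines_obtains_subset[OF PQ q]] by blast
  qed (use \<sigma> q in blast)
  then have "Q \<subseteq> P"
    using \<sigma> by auto
  then show ?thesis
    using finP card by (metis card_subset_eq)
qed

lemma refines_Union_Int_blocks:
  assumes PQ: "refines A P Q" and "q \<in> Q" "B \<subseteq> P"
  shows "\<Union>(B \<inter> {p \<in> P. p \<subseteq> q}) = \<Union>B \<inter> q"
proof (intro equalityI subsetI)
  fix x assume "x \<in> \<Union>B \<inter> q"
  then obtain p where "p \<in> B" "x \<in> p" "x \<in> q"
    by blast
  moreover obtain q' where "q' \<in> Q" "p \<subseteq> q'"
    using PQ \<open>p \<in> B\<close> \<open>B \<subseteq> P\<close> unfolding refines_def by blast
  moreover have "disjoint Q"
    using PQ unfolding refines_def partition_on_def by blast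
  ultimately have "q' = q"
    using disjointD[of Q q' q] \<open>q \<in> Q\<close> by blast
  then show "x \<in> \<Union>(B \<inter> {p \<in> P. p \<subseteq> q})"
    using \<open>p \<in> B\<close> \<open>x \<in> p\<close> \<open>p \<subseteq> q'\<close> \<open>B \<subseteq> P\<close> by blast
qed blast

definition decomposition :: "'a set \<Rightarrow> ('a set \<Rightarrow> int) \<Rightarrow> 'a set set \<Rightarrow> bool" where
  "decomposition X g P \<longleftrightarrow> partition_on X P \<and>
     (\<forall>A. A \<subseteq> X \<longrightarrow> g A = (\<Sum>p\<in>P. g (A \<inter> p))) \<and> (\<forall>p\<in>P. indecomposable p g)"

lemma decomposition_sum:
  "decomposition X g P \<Longrightarrow> A \<subseteq> X \<Longrightarrow> g A = (\<Sum>p\<in>P. g (A \<inter> p))"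
  unfolding decomposition_def by blast

lemma partition_block_separator:
  assumes "finite X" "g {} = 0" "partition_on X P"
    and sum: "\<And>A. A \<subseteq> X \<Longrightarrow> g A = (\<Sum>q\<in>P. g (A \<inter> q))" and "p \<in> P"
  shows "separator X g p"
  unfolding separator_def
proof (intro conjI allI impI)
  have finP: "finite P"
    using finite_elements assms(1,3) .
  show "p \<subseteq> X"
    using assms(3,5) by (auto simp: partition_on_def)
  fix A assume "A \<subseteq> X"
  have sum_remove: "g B = g (B \<inter> p) + (\<Sum>q\<in>P - {p}. g (B \<inter> q))" if "B \<subseteq> X" for B
    using sum[OF that] sum.remove[OF finP \<open>p \<in> P\<close>] by simp
  have "(A - p) \<inter> q = A \<inter> q" if "q \<in> P - {p}" for q
    using assms(3,5) that unfolding partition_on_def disjoint_def by blast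
  then have "(\<Sum>q\<in>P - {p}. g ((A - p) \<inter> q)) = (\<Sum>q\<in>P - {p}. g (A \<inter> q))"
    by (intro sum.cong) auto
  moreover have "g (A - p) = g ((A - p) \<inter> p) + (\<Sum>q\<in>P - {p}. g ((A - p) \<inter> q))"
    using \<open>A \<subseteq> X\<close> by (intro sum_remove) blast
  moreover have "(A - p) \<inter> p = {}"
    by blast
  ultimately have "g (A - p) = (\<Sum>q\<in>P - {p}. g (A \<inter> q))"
    using \<open>g {} = 0\<close> by simp
  then show "g A = g (A \<inter> p) + g (A - p)"
    using sum_remove[OF \<open>A \<subseteq> X\<close>] by simp
qed

lemma refines_if_indecomposable_separators:
  assumes "g {} = 0" "partition_on X Q" "\<forall>q\<in>Q. indecomposable q g"
    and "partition_on X P" "\<forall>p\<in>P. separator X g p"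
  shows "refines X Q P"
  unfolding refines_def
proof (intro conjI ballI)
  fix q assume "q \<in> Q"
  then have "q \<noteq> {}" "q \<subseteq> X"
    using assms(2) by (auto simp: partition_on_def)
  then obtain x where "x \<in> q"
    by blast
  then obtain p where "p \<in> P" "x \<in> p"
    using partition_onD1[OF assms(4)] \<open>q \<subseteq> X\<close> by blast
  moreover have "indecomposable q g" "separator X g p" "q \<inter> p \<noteq> {}"
    using assms(3,5) \<open>q \<in> Q\<close> \<open>p \<in> P\<close> \<open>x \<in> q\<close> \<open>x \<in> p\<close> by auto
  ultimately show "\<exists>p\<in>P. q \<subseteq> p"
    using indecomposable_subset_separator[of g q X p] assms(1) \<open>q \<subseteq> X\<close> \<open>p \<in> P\<close> by blast
qed (fact assms(2), fact assms(4))

lemma decomposition_unique: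
  assumes "finite X" "g {} = 0" "decomposition X g P" "decomposition X g Q"
  shows "P = Q"
proof -
  have refines: "refines X P Q" if P: "decomposition X g P" and Q: "decomposition X g Q" for P Q
  proof (rule refines_if_indecomposable_separators[of g])
    show "partition_on X P" "\<forall>p\<in>P. indecomposable p g" "partition_on X Q"
      using P Q unfolding decomposition_def by blast+
    show "\<forall>q\<in>Q. separator X g q"
      using Q partition_block_separator[of X g Q] assms(1,2) unfolding decomposition_def by blast
  qed (fact assms(2))
  show ?thesis
    using refines[OF assms(3,4)] refines[OF assms(4,3)] by (rule refines_asym)
qed

lemma decomposition_Un:
  assumes "finite X" and sep: "separator X g Y"
    and P: "decomposition Y g P" and Q: "decomposition (X - Y) g Q"
  shows "decomposition X g (P \<union> Q)"
proof -
  have "Y \<subseteq> X"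
    using sep unfolding separator_def by blast
  have partP: "partition_on Y P" and partQ: "partition_on (X - Y) Q"
    using P Q unfolding decomposition_def by blast+
  have "finite P" "finite Q"
    using finite_elements[OF _ partP] finite_elements[OF _ partQ] \<open>Y \<subseteq> X\<close> \<open>finite X\<close>
    by (auto dest: finite_subset)
  have "p = {}" if "p \<in> P" "p \<in> Q" for p
    using that partP partQ unfolding partition_on_def by blast
  then have "P \<inter> Q = {}"
    using partition_onD3[OF partP] by blast
  have "g A = (\<Sum>p\<in>P \<union> Q. g (A \<inter> p))" if "A \<subseteq> X" for A
  proof -
    have "g A = g (A \<inter> Y) + g (A - Y)"
      using sep that unfolding separator_def by blast
    also have "g (A \<inter> Y) = (\<Sum>p\<in>P. g (A \<inter> Y \<inter> p))"
      using P unfolding decomposition_def by blast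
    also have "\<dots> = (\<Sum>p\<in>P. g (A \<inter> p))"
      using partP by (intro sum.cong) (auto simp: partition_on_def intro!: arg_cong[where f = g])
    also have "g (A - Y) = (\<Sum>q\<in>Q. g ((A - Y) \<inter> q))"
      using Q that Diff_mono[OF that order_refl] unfolding decomposition_def by blast
    also have "\<dots> = (\<Sum>q\<in>Q. g (A \<inter> q))"
      using partQ by (intro sum.cong) (auto simp: partition_on_def intro!: arg_cong[where f = g])
    finally show ?thesis
      using sum.union_disjoint[OF \<open>finite P\<close> \<open>finite Q\<close> \<open>P \<inter> Q = {}\<close>, of "\<lambda>p. g (A \<inter> p)"]
      by simp
  qed
  moreover have "partition_on X (P \<union> Q)"
    using partition_on_Un[OF partP partQ] \<open>Y \<subseteq> X\<close> by (simp add: Un_absorb1)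
  ultimately show ?thesis
    using P Q unfolding decomposition_def by blast
qed

lemma decomposition_exists:
  assumes "finite X" "g {} = 0"
  shows "\<exists>P. decomposition X g P"
  using assms(1)
proof (induction X rule: finite_psubset_induct)
  case (psubset X)
  consider "X = {}" | "indecomposable X g" | Y where "separator X g Y" "Y \<noteq> {}" "Y \<noteq> X"
    using indecomposable_iff_separator[of g X] assms(2) by blast
  then show ?case
  proof cases
    case 1
    then show ?thesis
      using assms(2) by (auto simp: decomposition_def partition_on_empty)
  next
    case 2
    then have "decomposition X g {X}"
      using partition_on_space[of X] unfolding decomposition_def indecomposable_def
      by (auto simp: Int_absorb2)
    then show ?thesis ..
  next
    case 3
    then have "Y \<subseteq> X"
      unfolding separator_def by blast
    with 3 have "Y \<subset> X" "X - Y \<subset> X"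
      by blast+
    obtain P Q where "decomposition Y g P" "decomposition (X - Y) g Q"
      using psubset.IH[OF \<open>Y \<subset> X\<close>] psubset.IH[OF \<open>X - Y \<subset> X\<close>] by blast
    then show ?thesis
      using decomposition_Un[OF psubset.hyps \<open>separator X g Y\<close>] by blast
  qed
qed

lemma equiv_eq_same_class:
  assumes "equiv X R"
  shows "R = {(x, y). \<exists>p\<in>X // R. x \<in> p \<and> y \<in> p}"
proof (intro set_eqI iffI)
  fix xy assume "xy \<in> R"
  then obtain x y where xy: "xy = (x, y)" "(x, y) \<in> R" "x \<in> X"
    using equiv_type[OF assms] by fastforce
  then have "R `` {x} \<in> X // R" "x \<in> R `` {x}" "y \<in> R `` {x}"
    using quotientI equiv_class_self[OF assms] by fastforce+
  then show "xy \<in> {(x, y). \<exists>p\<in>X // R. x \<in> p \<and> y \<in> p}"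
    using xy by blast
next
  fix xy assume "xy \<in> {(x, y). \<exists>p\<in>X // R. x \<in> p \<and> y \<in> p}"
  then obtain x y p where "xy = (x, y)" "p \<in> X // R" "x \<in> p" "y \<in> p"
    by blast
  then show "xy \<in> R"
    using quotient_eq_iff[OF assms, of p p x y] by simp
qed

lemma quotient_icomp_rel:
  assumes "finite X" "g {} = 0" "decomposition X g P"
  shows "X // icomp_rel X g = P"
proof -
  let ?R = "{(x, y). \<exists>p\<in>P. x \<in> p \<and> y \<in> p}"
  have part: "partition_on X P"
    using assms(3) unfolding decomposition_def by blast
  have "icomp_rel X g = ?R"
    unfolding icomp_rel_def
  proof (rule the_equality)
    show "equiv X ?R \<and> (\<forall>A. A \<subseteq> X \<longrightarrow> g A = (\<Sum>Y\<in>X // ?R. g (A \<inter> Y))) \<and>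
        (\<forall>Y\<in>X // ?R. indecomposable Y g)"
      unfolding partition_on_eq_quotient[OF part]
      using equiv_partition_on[OF part] assms(3) unfolding decomposition_def by blast
  next
    fix R assume R: "equiv X R \<and> (\<forall>A. A \<subseteq> X \<longrightarrow> g A = (\<Sum>Y\<in>X // R. g (A \<inter> Y))) \<and>
        (\<forall>Y\<in>X // R. indecomposable Y g)"
    then have "decomposition X g (X // R)"
      unfolding decomposition_def using partition_on_quotient by blast
    then have "X // R = P"
      using decomposition_unique assms by blast
    then show "R = ?R"
      using equiv_eq_same_class[of X R] R by simp
  qed
  then show ?thesis
    using partition_on_eq_quotient[OF part] by simp
qed

lemma decomposition_icomp_rel:
  assumes "finite X" "g {} = 0"
  shows "decomposition X g (X // icomp_rel X g)"
  using decomposition_exists[of X g, OF assms] quotient_icomp_rel[of X g, OF assms] by metis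

lemma ic_eq_card:
  assumes "finite X" "g {} = 0" "decomposition X g P"
  shows "ic X g = card P"
  unfolding ic_def using quotient_icomp_rel[of X g, OF assms] by simp

lemma split_fun_block:
  assumes "finite X" "f {} = 0" "equiv X R" "p \<in> X // R" "B \<subseteq> p"
  shows "split_fun X f R B = f B"
proof -
  have "finite (X // R)"
    using finite_quotient[OF assms(1) equiv_type[OF assms(3)]] .
  moreover have "B \<inter> q = {}" if "q \<in> X // R - {p}" for q
    using quotient_disj[OF assms(3) assms(4), of q] that assms(5) by blast
  ultimately have "split_fun X f R B = f (B \<inter> p)"
    unfolding split_fun_def using assms(2,4) by (simp add: sum.remove)
  then show ?thesis
    using assms(5) by (simp add: Int_absorb2)
qed

lemma quotient_icomp_rel_if_separators:
  assumes "finite X" "g {} = 0" "partition_on X P" "\<forall>p\<in>P. separator X g p"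
    and "ic X g = card P"
  shows "X // icomp_rel X g = P"
proof -
  let ?Q = "X // icomp_rel X g"
  have "decomposition X g ?Q"
    using decomposition_icomp_rel[of X g] assms(1,2) .
  then have "refines X ?Q P"
    using refines_if_indecomposable_separators[of g X ?Q P] assms(2-4)
    unfolding decomposition_def by blast
  moreover have "card ?Q = card P"
    using assms(5) unfolding ic_def .
  ultimately show ?thesis
    using refines_card_eq assms(1) by blast
qed

lemma EW_imp_blocks_indecomposable:
  assumes "finite X" "f {} = 0" "R \<in> EW X f" "p \<in> X // R"
  shows "indecomposable p f"
proof -
  let ?h = "split_fun X f R"
  have R: "equiv X R" and card: "ic X ?h = card (X // R)"
    using assms(3) unfolding EW_def by blast+
  have h0: "?h {} = 0"
    unfolding split_fun_def using assms(2) by simp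
  have h_block: "?h B = f B" if "q \<in> X // R" "B \<subseteq> q" for q B
    using split_fun_block[of X f R q B] assms(1,2) R that by blast
  have "?h A = (\<Sum>q\<in>X // R. ?h (A \<inter> q))" for A
  proof -
    have "?h A = (\<Sum>q\<in>X // R. f (A \<inter> q))"
      by (simp only: split_fun_def)
    also have "\<dots> = (\<Sum>q\<in>X // R. ?h (A \<inter> q))"
      using h_block by (intro sum.cong) auto
    finally show ?thesis .
  qed
  then have "\<forall>q\<in>X // R. separator X ?h q"
    using partition_block_separator[of X ?h "X // R"] assms(1) h0 partition_on_quotient[OF R]
    by blast
  then have "X // icomp_rel X ?h = X // R"
    using quotient_icomp_rel_if_separators[of X ?h "X // R"] assms(1) h0 card
      partition_on_quotient[OF R] by blast
  then have "indecomposable p ?h"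
    using decomposition_icomp_rel[of X ?h] assms(1,4) h0 unfolding decomposition_def by blast
  then show ?thesis
    using indecomposable_cong[of p ?h f] h_block assms(4) by blast
qed

lemma quot_fun_eq_Union:
  assumes "equiv X R" "B \<subseteq> X // R"
  shows "quot_fun X f R B = f (\<Union>B)"
proof -
  have "{x \<in> X. R `` {x} \<in> B} = \<Union>B"
  proof (intro equalityI subsetI)
    fix x assume "x \<in> {x \<in> X. R `` {x} \<in> B}"
    then show "x \<in> \<Union>B"
      using equiv_class_self[OF assms(1)] by blast
  next
    fix x assume "x \<in> \<Union>B"
    then obtain p where "p \<in> B" "x \<in> p"
      by blast
    moreover from this obtain y where "y \<in> X" "p = R `` {y}"
      using assms(2) by (auto elim: quotientE)
    ultimately show "x \<in> {x \<in> X. R `` {x} \<in> B}"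
      using equiv_class_eq[OF assms(1)] equiv_type[OF assms(1)] by auto
  qed
  then show ?thesis
    unfolding quot_fun_def by simp
qed

lemma rigid_indec_trivial_split:
  assumes "f {} = 0" "indecomposable c f" "rigid_indec c f" "U \<subseteq> c"
    and split: "f c = f U + f (c - U)"
  shows "U = {} \<or> U = c"
proof -
  have "separator c f U"
    unfolding separator_def
  proof (intro conjI allI impI)
    fix A assume "A \<subseteq> c"
    have "f (U \<union> (c - U)) = f U + f (c - U)"
      using split assms(4) by (simp add: Un_absorb1)
    moreover have "A \<inter> U \<subseteq> U" "A - U \<subseteq> c - U" "U \<inter> (c - U) = {}"
      using \<open>A \<subseteq> c\<close> by blast+
    ultimately have "f ((A \<inter> U) \<union> (A - U)) = f (A \<inter> U) + f (A - U)"
      using assms(3,4) unfolding rigid_indec_def by (meson Diff_subset)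
    moreover have "(A \<inter> U) \<union> (A - U) = A"
      by blast
    ultimately show "f A = f (A \<inter> U) + f (A - U)"
      by simp
  qed fact
  then show ?thesis
    using indecomposable_iff_separator[of f c] assms(1,2) by blast
qed

lemma indecomposable_on_blocks:
  assumes "f {} = 0" "indecomposable c f" "rigid_indec c f" "partition_on c P"
    and k: "\<And>B. B \<subseteq> P \<Longrightarrow> k B = f (\<Union>B)"
  shows "indecomposable P k"
proof -
  have "c = \<Union>P" "disjoint P" "{} \<notin> P"
    using assms(4) unfolding partition_on_def by blast+
  have "k {} = 0"
    using k[of "{}"] assms(1) by simp
  have "P \<noteq> {}"
    using assms(2) \<open>c = \<Union>P\<close> unfolding indecomposable_def by blast
  have "\<forall>S. separator P k S \<longrightarrow> S = {} \<or> S = P"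
  proof (intro allI impI)
    fix S assume S: "separator P k S"
    have "S \<subseteq> P"
      using S unfolding separator_def by blast
    have "k P = k (P \<inter> S) + k (P - S)"
      using S unfolding separator_def by blast
    moreover have "P \<inter> S = S"
      using \<open>S \<subseteq> P\<close> by blast
    moreover have "\<Union>(P - S) = c - \<Union>S"
      using diff_Union_pairwise_disjoint[OF \<open>disjoint P\<close> \<open>S \<subseteq> P\<close>] \<open>c = \<Union>P\<close> by simp
    ultimately have "f c = f (\<Union>S) + f (c - \<Union>S)"
      using k[of P] k[of S] k[of "P - S"] \<open>S \<subseteq> P\<close> \<open>c = \<Union>P\<close> by simp
    then have "\<Union>S = {} \<or> \<Union>S = c"
      using rigid_indec_trivial_split[of f c "\<Union>S"] assms(1-3) \<open>S \<subseteq> P\<close> \<open>c = \<Union>P\<close> by blast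
    then show "S = {} \<or> S = P"
    proof
      assume "\<Union>S = {}"
      then show ?thesis
        using partition_on_Union_eq_empty[OF assms(4) \<open>S \<subseteq> P\<close>] by blast
    next
      assume "\<Union>S = c"
      then have "\<Union>(P - S) = {}"
        using \<open>\<Union>(P - S) = c - \<Union>S\<close> by simp
      then have "P - S = {}"
        using partition_on_Union_eq_empty[OF assms(4), of "P - S"] by blast
      then show ?thesis
        using \<open>S \<subseteq> P\<close> by blast
    qed
  qed
  with \<open>P \<noteq> {}\<close> show ?thesis
    using indecomposable_iff_separator[of k P] \<open>k {} = 0\<close> by simp
qed

lemma decomposition_on_blocks:
  assumes "finite X" "f {} = 0" and C: "decomposition X f C" and rig: "\<forall>c\<in>C. rigid_indec c f"
    and PC: "refines X P C" and k: "\<And>B. B \<subseteq> P \<Longrightarrow> k B = f (\<Union>B)"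
  shows "decomposition P k ((\<lambda>c. {p \<in> P. p \<subseteq> c}) ` C)"
proof -
  let ?d = "\<lambda>c. {p \<in> P. p \<subseteq> c}"
  have "k B = (\<Sum>a\<in>?d ` C. k (B \<inter> a))" if "B \<subseteq> P" for B
  proof -
    have "\<Union>(B \<inter> ?d c) = \<Union>B \<inter> c" if "c \<in> C" for c
      using refines_Union_Int_blocks[OF PC that \<open>B \<subseteq> P\<close>] .
    then have "(\<Sum>a\<in>?d ` C. k (B \<inter> a)) = (\<Sum>c\<in>C. f (\<Union>B \<inter> c))"
      using sum.reindex[OF refines_blocks_within(2)[OF PC], of "\<lambda>a. k (B \<inter> a)"] k \<open>B \<subseteq> P\<close>
      by (simp add: Int_lower1 subset_trans[of _ B P])
    also have "\<dots> = f (\<Union>B)"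
    proof -
      have "\<Union>B \<subseteq> X"
        using \<open>B \<subseteq> P\<close> partition_onD1[of X P] PC unfolding refines_def by blast
      then show ?thesis
        using decomposition_sum[OF C] by simp
    qed
    finally show ?thesis
      using k[OF \<open>B \<subseteq> P\<close>] by simp
  qed
  moreover have "indecomposable (?d c) k" if "c \<in> C" for c
  proof (rule indecomposable_on_blocks[of f, OF assms(2)])
    show "indecomposable c f" "rigid_indec c f"
      using C rig that unfolding decomposition_def by blast+
    show "partition_on c (?d c)"
      using refines_obtains_subset[OF PC that] .
    show "k B = f (\<Union>B)" if "B \<subseteq> ?d c" for B
      using k that by blast
  qed
  ultimately show ?thesis
    using refines_blocks_within(1)[OF PC] unfolding decomposition_def by blast
qed

lemma ic_quot_fun_eq:
  assumes "finite X" "f {} = 0" "equiv X R" "rigid X f" "\<forall>p\<in>X // R. indecomposable p f"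
  shows "ic (X // R) (quot_fun X f R) = ic X f"
proof -
  let ?C = "X // icomp_rel X f"
  let ?k = "quot_fun X f R"
  let ?d = "\<lambda>c. {p \<in> X // R. p \<subseteq> c}"
  have C: "decomposition X f ?C"
    using decomposition_icomp_rel[of X f] assms(1,2) .
  have partR: "partition_on X (X // R)"
    using partition_on_quotient[OF assms(3)] .
  have "refines X (X // R) ?C"
    using refines_if_indecomposable_separators[of f X "X // R" ?C] assms(2,5) partR
      partition_block_separator[of X f ?C] assms(1) C
    unfolding decomposition_def by blast
  then have "decomposition (X // R) ?k (?d ` ?C)"
    using decomposition_on_blocks[of X f ?C "X // R" ?k] assms(1,2) C assms(4)
      quot_fun_eq_Union[OF assms(3)]
    unfolding rigid_def by blast
  moreover have "finite (X // R)" "?k {} = 0"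
    using finite_quotient[OF assms(1) equiv_type[OF assms(3)]] assms(2)
    by (auto simp: quot_fun_def)
  ultimately have "ic (X // R) ?k = card (?d ` ?C)"
    using ic_eq_card by blast
  also have "\<dots> = card ?C"
    using card_image[OF refines_blocks_within(2)[OF \<open>refines X (X // R) ?C\<close>]] .
  finally show ?thesis
    unfolding ic_def .
qed

theorem lemma4p13:
  fixes X :: "'a set" and f :: "'a set \<Rightarrow> int"
  assumes "bool_fun X f"
    and "rigid X f"
  shows "EW X f = ES X f"
proof
  show "ES X f \<subseteq> EW X f"
    unfolding ES_def by blast
  show "EW X f \<subseteq> ES X f"
  proof
    fix R assume R: "R \<in> EW X f"
    have "finite X" "f {} = 0"
      using assms(1) unfolding bool_fun_def by blast+
    moreover have "equiv X R"
      using R unfolding EW_def by blast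
    moreover have "\<forall>p\<in>X // R. indecomposable p f"
      using EW_imp_blocks_indecomposable \<open>finite X\<close> \<open>f {} = 0\<close> R by blast
    ultimately have "ic (X // R) (quot_fun X f R) = ic X f"
      using ic_quot_fun_eq assms(2) by blast
    then show "R \<in> ES X f"
      using R unfolding ES_def by blast
  qed
qed

end
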